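(* In the setting described in the context, for every $\xi\in\Omega_M$ the set $$\mathcal{F}(\xi):=\Big\{\mu\in\mathbb{H}^p_0:\ \int_{\mathbb{R}^n}F(z+\xi)\,d\mu(z)\le\varepsilon+R(\xi)\Big\}$$ is a non-empty subset of $Y_M$ which is closed in $Y_M$ with respect to the weak* topology of $E^*$.
   Context: $1<p<\infty$; $\Omega\subset\mathbb{R}^N$ open bounded with $|\partial\Omega|=0$; $\mathcal{A}v=\sum_{i=1}^NA^i\partial v/\partial x_i$ with linear $A^i\colon\mathbb{R}^n\to\mathbb{R}^d$, symbol $\mathbb{A}(w)=\sum w_iA^i$ of constant rank on $S^{N-1}$. $\mathbb{H}^p_0$ is the set of probability measures $\mu$ on $\mathbb{R}^n$ with $\int z\,d\mu=0$ that are homogeneous Young measures generated by a sequence $\{V_j\}\subset\mathrm{L}^p(\Omega;\mathbb{R}^n)$ with $\mathcal{A}V_j=0$ and $V_j$ weakly convergent in $\mathrm{L}^p$. $E:=\{g\in C(\mathbb{R}^n):\lim_{|z|\to\infty}g(z)/(1+|z|^p)\text{ exists in }\mathbb{R}\}$ with norm $\|g\|_E=\sup_z|g(z)|/(1+|z|^p)$; probability measures with finite $p$-th moment are regarded as elements of $E^*$. $F\colon\mathbb{R}^n\to[0,\infty]$ is lower semi-continuous with $F(\xi)\ge C|\xi|^p$ for some $C>0$. Define $R(\xi):=\inf_{\nu\in\mathbb{H}^p_0}\int F(z+\xi)\,d\nu(z)$. Fix $\varepsilon>0$ and $M\in\mathbb{N}$, let $\Omega_M:=\{\xi\in\mathbb{R}^n:|\xi|<M,\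 R(\xi)\le M\}$, let $C_M>0$ be a constant such that every $\mu\in\mathbb{H}^p_0$ with $\int F(z+\xi)\,d\mu(z)\le\varepsilon+R(\xi)$ for some $\xi\in\Omega_M$ satisfies $\int|z|^p\,d\mu\le C_M$, and let $Y_M:=\{\mu\in\mathbb{H}^p_0:\int|z|^p\,d\mu(z)\le C_M\}$, equipped with the weak* topology of $E^*$. *)

theory Defs
  imports "HOL-Probability.Probability"
begin

definition Lp :: "real \<Rightarrow> 'a::euclidean_space set \<Rightarrow> ('a \<Rightarrow> 'b::euclidean_space) set" where
  "Lp p \<Omega> = {V. V \<in> borel_measurable (lebesgue_on \<Omega>) \<and>
                 integrable (lebesgue_on \<Omega>) (\<lambda>x. norm (V x) powr p)}"

definition partial_deriv :: "'m::finite \<Rightarrow> (real^'m \<Rightarrow> 'b::real_normed_vector) \<Rightarrow> real^'m \<Rightarrow> 'b" where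
  "partial_deriv i f x = frechet_derivative f (at x) (axis i 1)"

definition smooth_fun :: "(real^'m::finite \<Rightarrow> 'b::real_normed_vector) \<Rightarrow> bool" where
  "smooth_fun f \<longleftrightarrow> (\<forall>is. foldr partial_deriv is f differentiable_on UNIV)"

definition test_fun :: "(real^'m::finite) set \<Rightarrow> (real^'m \<Rightarrow> 'b::real_normed_vector) \<Rightarrow> bool" where
  "test_fun \<Omega> \<psi> \<longleftrightarrow> smooth_fun \<psi> \<and> compact (closure {x. \<psi> x \<noteq> 0})
                      \<and> closure {x. \<psi> x \<noteq> 0} \<subseteq> \<Omega>"

definition symbol :: "('m::finite \<Rightarrow> real^'n \<Rightarrow> real^'d) \<Rightarrow> real^'m \<Rightarrow> real^'n \<Rightarrow> real^'d" where
  "symbol A w v = (\<Sum>i\<in>UNIV. w$i *\<^sub>R A i v)"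

text \<open>\<A>V = 0 in the sense of distributions on \<Omega>.\<close>
definition A_free :: "('m::finite \<Rightarrow> real^'n \<Rightarrow> real^'d) \<Rightarrow> (real^'m) set \<Rightarrow> (real^'m \<Rightarrow> real^'n) \<Rightarrow> bool" where
  "A_free A \<Omega> V \<longleftrightarrow> (\<forall>\<psi> :: real^'m \<Rightarrow> real^'d. test_fun \<Omega> \<psi> \<longrightarrow>
      integral\<^sup>L (lebesgue_on \<Omega>) (\<lambda>x. \<Sum>i\<in>UNIV. inner (A i (V x)) (partial_deriv i \<psi> x)) = 0)"

definition weakly_conv_Lp :: "real \<Rightarrow> 'a::euclidean_space set \<Rightarrow> (nat \<Rightarrow> 'a \<Rightarrow> 'b::euclidean_space) \<Rightarrow> bool" where
  "weakly_conv_Lp p \<Omega> V \<longleftrightarrow> (\<exists>V0 \<in> Lp p \<Omega>. \<forall>w \<in> Lp (p / (p - 1)) \<Omega>.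
      (\<lambda>j. integral\<^sup>L (lebesgue_on \<Omega>) (\<lambda>x. inner (w x) (V j x)))
        \<longlonglongrightarrow> integral\<^sup>L (lebesgue_on \<Omega>) (\<lambda>x. inner (w x) (V0 x)))"

definition C0 :: "('b::real_normed_vector \<Rightarrow> real) \<Rightarrow> bool" where
  "C0 \<phi> \<longleftrightarrow> continuous_on UNIV \<phi> \<and> (\<phi> \<longlongrightarrow> 0) at_infinity"

text \<open>The sequence V generates the homogeneous Young measure \<mu>:
  \<phi>(V_j) converges weakly* in L^infinity(\<Omega>) to the constant \<integral>\<phi> d\<mu>, for every \<phi> in C_0.\<close>
definition generates_hom :: "'a::euclidean_space set \<Rightarrow> (nat \<Rightarrow> 'a \<Rightarrow> 'b::euclidean_space) \<Rightarrow> 'b measure \<Rightarrow> bool" where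
  "generates_hom \<Omega> V \<mu> \<longleftrightarrow> (\<forall>\<phi>. C0 \<phi> \<longrightarrow> (\<forall>g. integrable (lebesgue_on \<Omega>) g \<longrightarrow>
      (\<lambda>j. integral\<^sup>L (lebesgue_on \<Omega>) (\<lambda>x. g x * \<phi> (V j x)))
        \<longlonglongrightarrow> integral\<^sup>L (lebesgue_on \<Omega>) g * integral\<^sup>L \<mu> \<phi>))"

definition prob_meas :: "'b::euclidean_space measure \<Rightarrow> bool" where
  "prob_meas \<mu> \<longleftrightarrow> prob_space \<mu> \<and> sets \<mu> = sets borel"

definition H0 :: "real \<Rightarrow> (real^'m::finite) set \<Rightarrow> ('m \<Rightarrow> real^'n \<Rightarrow> real^'d) \<Rightarrow> (real^'n) measure set" where
  "H0 p \<Omega> A = {\<mu>. prob_meas \<mu> \<and> integrable \<mu> (\<lambda>z. z) \<and> integral\<^sup>L \<mu> (\<lambda>z. z) = 0 \<and>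
      (\<exists>V. (\<forall>j. V j \<in> Lp p \<Omega>) \<and> (\<forall>j. A_free A \<Omega> (V j)) \<and> weakly_conv_Lp p \<Omega> V
           \<and> generates_hom \<Omega> V \<mu>)}"

definition E_space :: "real \<Rightarrow> ('b::real_normed_vector \<Rightarrow> real) set" where
  "E_space p = {g. continuous_on UNIV g \<and>
      (\<exists>l. ((\<lambda>z. g z / (1 + norm z powr p)) \<longlongrightarrow> l) at_infinity)}"

text \<open>Probability measures with finite p-th moment (regarded as elements of E^*).\<close>
definition Pmeas_p :: "real \<Rightarrow> 'b::euclidean_space measure set" where
  "Pmeas_p p = {\<mu>. prob_meas \<mu> \<and> integrable \<mu> (\<lambda>z. norm z powr p)}"

text \<open>Weak* topology of E^* restricted to these measures: the initial topology of
  the pairings \<mu> \<mapsto> \<integral> g d\<mu>, g \<in> E.\<close>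
definition weakstar :: "real \<Rightarrow> 'b::euclidean_space measure topology" where
  "weakstar p = pullback_topology (Pmeas_p p)
      (\<lambda>\<mu>. restrict (\<lambda>g. integral\<^sup>L \<mu> g) (E_space p))
      (product_topology (\<lambda>_. euclideanreal) (E_space p))"

definition lsc :: "('a::topological_space \<Rightarrow> ennreal) \<Rightarrow> bool" where
  "lsc F \<longleftrightarrow> (\<forall>x. F x \<le> Liminf (at x) F)"

definition Rfun :: "real \<Rightarrow> (real^'m::finite) set \<Rightarrow> ('m \<Rightarrow> real^'n \<Rightarrow> real^'d)
      \<Rightarrow> (real^'n \<Rightarrow> ennreal) \<Rightarrow> real^'n \<Rightarrow> ennreal" where
  "Rfun p \<Omega> A F \<xi> = (INF \<nu>\<in>H0 p \<Omega> A. \<integral>\<^sup>+ z. F (z + \<xi>) \<partial>\<nu>)"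

definition Omega_M :: "real \<Rightarrow> (real^'m::finite) set \<Rightarrow> ('m \<Rightarrow> real^'n \<Rightarrow> real^'d)
      \<Rightarrow> (real^'n \<Rightarrow> ennreal) \<Rightarrow> nat \<Rightarrow> (real^'n) set" where
  "Omega_M p \<Omega> A F M = {\<xi>. norm \<xi> < real M \<and> Rfun p \<Omega> A F \<xi> \<le> of_nat M}"

definition Y_M :: "real \<Rightarrow> (real^'m::finite) set \<Rightarrow> ('m \<Rightarrow> real^'n \<Rightarrow> real^'d)
      \<Rightarrow> real \<Rightarrow> (real^'n) measure set" where
  "Y_M p \<Omega> A CM = {\<mu> \<in> H0 p \<Omega> A. (\<integral>\<^sup>+ z. ennreal (norm z powr p) \<partial>\<mu>) \<le> ennreal CM}"

definition Fset :: "real \<Rightarrow> (real^'m::finite) set \<Rightarrow> ('m \<Rightarrow> real^'n \<Rightarrow> real^'d)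
      \<Rightarrow> (real^'n \<Rightarrow> ennreal) \<Rightarrow> real \<Rightarrow> real^'n \<Rightarrow> (real^'n) measure set" where
  "Fset p \<Omega> A F \<epsilon> \<xi> = {\<mu> \<in> H0 p \<Omega> A.
      (\<integral>\<^sup>+ z. F (z + \<xi>) \<partial>\<mu>) \<le> ennreal \<epsilon> + Rfun p \<Omega> A F \<xi>}"

end

theory Submission
  imports Defs "HOL-Real_Asymp.Real_Asymp"
begin

text \<open>
  Non-emptiness holds because \<open>R(\<xi>) \<le> M\<close> is finite, so the infimum defining it is
  approached within \<open>\<epsilon>\<close>; the inclusion in \<open>Y_M\<close> is the defining property of \<open>C_M\<close>.
  For closedness, the lower semi-continuous \<open>F\<close> is the increasing limit of the bounded
  Lipschitz functions \<open>F_k(x) = inf\<^sub>y (min (F y) k + k |x - y|)\<close>. By monotone convergence,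
  \<open>\<integral> F(z + \<xi>) d\<mu> \<le> c\<close> holds iff \<open>\<integral> F_k(z + \<xi>) d\<mu> \<le> c\<close> for all \<open>k\<close>, and each of these
  is a weak* closed condition because \<open>F_k(\<cdot> + \<xi>)\<close> is bounded and continuous, hence in \<open>E\<close>.
\<close>

definition lipschitz_approx :: "('a::metric_space \<Rightarrow> ennreal) \<Rightarrow> nat \<Rightarrow> 'a \<Rightarrow> real" where
  "lipschitz_approx F k x = Inf (range (\<lambda>y. enn2real (min (F y) (of_nat k)) + real k * dist x y))"

lemma lipschitz_approx_le:
  "lipschitz_approx F k x \<le> enn2real (min (F y) (of_nat k)) + real k * dist x y"
  unfolding lipschitz_approx_def by (rule cInf_lower) (auto intro: bdd_belowI[of _ 0])

lemma lipschitz_approx_ge: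
  assumes "\<And>y. a \<le> enn2real (min (F y) (of_nat k)) + real k * dist x y"
  shows "a \<le> lipschitz_approx F k x"
  unfolding lipschitz_approx_def using assms by (intro cInf_greatest) auto

lemma lipschitz_approx_nonneg: "0 \<le> lipschitz_approx F k x"
  by (rule lipschitz_approx_ge) simp

lemma enn2real_min_of_nat_le: "enn2real (min (a::ennreal) (of_nat k)) \<le> real k"
  by (metis enn2real_mono enn2real_of_nat min.cobounded2 of_nat_less_top)

lemma lipschitz_approx_le_index: "lipschitz_approx F k x \<le> real k"
  using lipschitz_approx_le[of F k x x] enn2real_min_of_nat_le[of "F x" k] by simp

lemma lipschitz_approx_le_fun: "ennreal (lipschitz_approx F k x) \<le> F x"
proof -
  have "ennreal (lipschitz_approx F k x) \<le> ennreal (enn2real (min (F x) (of_nat k)))"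
    using lipschitz_approx_le[of F k x x] by (intro ennreal_leI) simp
  also have "\<dots> = min (F x) (of_nat k)"
    by (simp add: min.strict_coboundedI2 of_nat_less_top)
  finally show ?thesis by simp
qed

lemma lipschitz_approx_lipschitz: "(real k)-lipschitz_on UNIV (lipschitz_approx F k)"
proof (rule lipschitz_onI)
  have *: "lipschitz_approx F k x \<le> lipschitz_approx F k x' + real k * dist x x'" for x x'
  proof -
    have "lipschitz_approx F k x - real k * dist x x' \<le> lipschitz_approx F k x'"
    proof (rule lipschitz_approx_ge)
      fix y
      have "real k * dist x y \<le> real k * dist x x' + real k * dist x' y"
        by (metis dist_triangle distrib_left mult_left_mono of_nat_0_le_iff)
      then show "lipschitz_approx F k x - real k * dist x x'
          \<le> enn2real (min (F y) (of_nat k)) + real k * dist x' y"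
        using lipschitz_approx_le[of F k x y] by simp
    qed
    then show ?thesis by simp
  qed
  fix x y
  show "dist (lipschitz_approx F k x) (lipschitz_approx F k y) \<le> real k * dist x y"
    using *[of x y] *[of y x] by (simp add: dist_real_def dist_commute abs_le_iff)
qed simp

lemma continuous_on_lipschitz_approx: "continuous_on UNIV (lipschitz_approx F k)"
  using lipschitz_approx_lipschitz by (rule lipschitz_on_continuous_on)

lemma lipschitz_approx_mono:
  assumes "m \<le> n"
  shows "lipschitz_approx F m x \<le> lipschitz_approx F n x"
proof (rule lipschitz_approx_ge)
  fix y
  have "enn2real (min (F y) (of_nat m)) \<le> enn2real (min (F y) (of_nat n))"
    using assms by (intro enn2real_mono) (auto simp: min.coboundedI2 min.strict_coboundedI2 of_nat_less_top)
  moreover have "real m * dist x y \<le> real n * dist x y"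
    using assms by (simp add: mult_right_mono)
  ultimately show "lipschitz_approx F m x \<le> enn2real (min (F y) (of_nat n)) + real n * dist x y"
    using lipschitz_approx_le[of F m x y] by linarith
qed

lemma SUP_lipschitz_approx:
  fixes F :: "'a::metric_space \<Rightarrow> ennreal"
  assumes lsc_at: "F x \<le> Liminf (at x) F"
  shows "(SUP k. ennreal (lipschitz_approx F k x)) = F x"
proof (rule antisym)
  show "(SUP k. ennreal (lipschitz_approx F k x)) \<le> F x"
    by (rule SUP_least) (rule lipschitz_approx_le_fun)
  show "F x \<le> (SUP k. ennreal (lipschitz_approx F k x))"
  proof (rule dense_le)
    fix b assume "b < F x"
    then obtain a where b: "b = ennreal a" "0 \<le> a"
      by (cases b) auto
    have "ennreal a < Liminf (at x) F" using \<open>b < F x\<close> b lsc_at by simp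
    then have "\<forall>\<^sub>F y in at x. ennreal a < F y" by (rule less_LiminfD)
    then obtain d where d: "d > 0" "\<And>y. y \<noteq> x \<Longrightarrow> dist y x < d \<Longrightarrow> ennreal a < F y"
      unfolding eventually_at by auto
    obtain k :: nat where k: "a \<le> real k" "a / d \<le> real k"
      by (metis max.boundedE real_arch_simple)
    have "a \<le> lipschitz_approx F k x"
    proof (rule lipschitz_approx_ge)
      fix y
      show "a \<le> enn2real (min (F y) (of_nat k)) + real k * dist x y"
      proof (cases "dist y x < d")
        case True
        have "ennreal a < F y" using d(2)[of y] True \<open>b < F x\<close> b by (cases "y = x") auto
        moreover have "ennreal a \<le> of_nat k"
          using k(1) by (simp add: ennreal_of_nat_eq_real_of_nat ennreal_leI)
        ultimately have "a \<le> enn2real (min (F y) (of_nat k))"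
          using b(2) enn2real_mono[of "ennreal a" "min (F y) (of_nat k)"]
          by (simp add: min.strict_coboundedI2 of_nat_less_top)
        then show ?thesis by (simp add: add_increasing2)
      next
        case False
        have "a \<le> real k * d" using k(2) d(1) by (simp add: divide_le_eq)
        also have "\<dots> \<le> real k * dist x y" using False by (simp add: dist_commute mult_left_mono)
        finally show ?thesis by (simp add: add_increasing)
      qed
    qed
    then have "b \<le> ennreal (lipschitz_approx F k x)" using b by (simp add: ennreal_leI)
    also have "\<dots> \<le> (SUP k. ennreal (lipschitz_approx F k x))" by (rule SUP_upper) simp
    finally show "b \<le> (SUP k. ennreal (lipschitz_approx F k x))" .
  qed
qed

lemma nn_integral_lsc_shift_eq_SUP:
  fixes F :: "'a::euclidean_space \<Rightarrow> ennreal"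
  assumes "finite_measure \<mu>" "sets \<mu> = sets borel" "lsc F"
  shows "(\<integral>\<^sup>+ z. F (z + \<xi>) \<partial>\<mu>) = (SUP k. ennreal (\<integral> z. lipschitz_approx F k (z + \<xi>) \<partial>\<mu>))"
proof -
  interpret finite_measure \<mu> by fact
  have meas: "(\<lambda>z. lipschitz_approx F k (z + \<xi>)) \<in> borel_measurable \<mu>" for k
    unfolding measurable_cong_sets[OF assms(2) refl]
    by (intro borel_measurable_continuous_onI continuous_on_compose2[OF continuous_on_lipschitz_approx])
       (auto intro!: continuous_intros)
  have "(\<integral>\<^sup>+ z. F (z + \<xi>) \<partial>\<mu>) = (\<integral>\<^sup>+ z. (SUP k. ennreal (lipschitz_approx F k (z + \<xi>))) \<partial>\<mu>)"
    using assms(3) unfolding lsc_def by (simp add: SUP_lipschitz_approx)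
  also have "\<dots> = (SUP k. (\<integral>\<^sup>+ z. ennreal (lipschitz_approx F k (z + \<xi>)) \<partial>\<mu>))"
    using meas
    by (intro nn_integral_monotone_convergence_SUP)
       (auto simp: incseq_def le_fun_def intro!: ennreal_leI lipschitz_approx_mono)
  also have "\<dots> = (SUP k. ennreal (\<integral> z. lipschitz_approx F k (z + \<xi>) \<partial>\<mu>))"
  proof (rule SUP_cong[OF refl])
    fix k
    have "integrable \<mu> (\<lambda>z. lipschitz_approx F k (z + \<xi>))"
      using meas
      by (intro integrable_const_bound[where B="real k"])
         (auto simp: lipschitz_approx_nonneg lipschitz_approx_le_index)
    then show "(\<integral>\<^sup>+ z. ennreal (lipschitz_approx F k (z + \<xi>)) \<partial>\<mu>)
        = ennreal (\<integral> z. lipschitz_approx F k (z + \<xi>) \<partial>\<mu>)"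
      by (rule nn_integral_eq_integral) (simp add: lipschitz_approx_nonneg)
  qed
  finally show ?thesis .
qed

lemma nn_integral_lsc_shift_le_iff:
  fixes F :: "'a::euclidean_space \<Rightarrow> ennreal"
  assumes "finite_measure \<mu>" "sets \<mu> = sets borel" "lsc F" "0 \<le> c"
  shows "(\<integral>\<^sup>+ z. F (z + \<xi>) \<partial>\<mu>) \<le> ennreal c
      \<longleftrightarrow> (\<forall>k. (\<integral> z. lipschitz_approx F k (z + \<xi>) \<partial>\<mu>) \<le> c)"
proof -
  have "0 \<le> (\<integral> z. lipschitz_approx F k (z + \<xi>) \<partial>\<mu>)" for k
    by (simp add: lipschitz_approx_nonneg)
  with assms show ?thesis
    by (auto simp: nn_integral_lsc_shift_eq_SUP SUP_le_iff ennreal_le_iff2 ennreal_le_iff)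
qed

lemma bounded_continuous_in_E_space:
  fixes g :: "'a::real_normed_vector \<Rightarrow> real"
  assumes p: "0 < p" and cont: "continuous_on UNIV g" and bound: "\<And>z. \<bar>g z\<bar> \<le> B"
  shows "g \<in> E_space p"
proof -
  have "filterlim (\<lambda>z::'a. norm z powr p) at_top at_infinity"
    by (rule filterlim_compose[OF real_powr_at_top[OF p] filterlim_norm_at_top])
  then have "filterlim (\<lambda>z::'a. 1 + norm z powr p) at_infinity at_infinity"
    by (intro filterlim_at_top_imp_at_infinity filterlim_tendsto_add_at_top[OF tendsto_const])
  then have lim: "((\<lambda>z::'a. B / (1 + norm z powr p)) \<longlongrightarrow> 0) at_infinity"
    by (rule tendsto_divide_0[OF tendsto_const])
  have "\<forall>\<^sub>F z in at_infinity. norm (g z / (1 + norm z powr p)) \<le> B / (1 + norm z powr p)"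
    using bound by (intro always_eventually) (simp add: add_pos_nonneg divide_right_mono)
  then have "((\<lambda>z. g z / (1 + norm z powr p)) \<longlongrightarrow> 0) at_infinity"
    using lim by (rule Lim_null_comparison)
  with cont show ?thesis
    unfolding E_space_def by blast
qed

lemma lipschitz_approx_shift_in_E_space:
  fixes \<xi> :: "'a::real_normed_vector"
  assumes "0 < p"
  shows "(\<lambda>z. lipschitz_approx F k (z + \<xi>)) \<in> E_space p"
proof (rule bounded_continuous_in_E_space[OF assms])
  show "continuous_on UNIV (\<lambda>z. lipschitz_approx F k (z + \<xi>))"
    by (rule continuous_on_compose2[OF continuous_on_lipschitz_approx]) (auto intro: continuous_intros)
  show "\<bar>lipschitz_approx F k (z + \<xi>)\<bar> \<le> real k" for z
    using lipschitz_approx_nonneg[of F k "z + \<xi>"] lipschitz_approx_le_index[of F k "z + \<xi>"]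
    by simp
qed

lemma continuous_map_weakstar_integral:
  assumes "h \<in> E_space p"
  shows "continuous_map (weakstar p) euclideanreal (\<lambda>\<mu>::'b::euclidean_space measure. integral\<^sup>L \<mu> h)"
proof -
  have "continuous_map (weakstar p) euclideanreal
      ((\<lambda>f. f h) \<circ> (\<lambda>\<mu>::'b measure. restrict (\<lambda>g. integral\<^sup>L \<mu> g) (E_space p)))"
    unfolding weakstar_def
    by (intro continuous_map_pullback continuous_map_product_projection assms)
  then show ?thesis
    using assms by (simp add: o_def)
qed

lemma topspace_weakstar: "topspace (weakstar p) = Pmeas_p p"
  unfolding weakstar_def topspace_pullback_topology topspace_product_topology by auto

lemma Y_M_subset_Pmeas_p: "Y_M p \<Omega> A CM \<subseteq> Pmeas_p p"
proof
  fix \<mu> assume "\<mu> \<in> Y_M p \<Omega> A CM"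
  then have pm: "prob_meas \<mu>" and mom: "(\<integral>\<^sup>+ z. ennreal (norm z powr p) \<partial>\<mu>) \<le> ennreal CM"
    unfolding Y_M_def H0_def by auto
  have sets: "sets \<mu> = sets borel"
    using pm by (simp add: prob_meas_def)
  have "(\<lambda>z. norm z powr p) \<in> borel_measurable \<mu>"
    unfolding measurable_cong_sets[OF sets refl] by measurable
  moreover have "(\<integral>\<^sup>+ z. ennreal (norm (norm z powr p)) \<partial>\<mu>) < \<infinity>"
    using mom by (simp add: ennreal_less_top order.strict_trans1)
  ultimately have "integrable \<mu> (\<lambda>z. norm z powr p)"
    by (rule integrableI_bounded)
  with pm show "\<mu> \<in> Pmeas_p p" unfolding Pmeas_p_def by simp
qed

lemma Fset_nonempty:
  assumes "\<epsilon> > 0" "Rfun p \<Omega> A F \<xi> = ennreal r" "0 \<le> r"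
  shows "Fset p \<Omega> A F \<epsilon> \<xi> \<noteq> {}"
proof -
  have "Rfun p \<Omega> A F \<xi> < ennreal \<epsilon> + Rfun p \<Omega> A F \<xi>"
    using assms by (simp add: ennreal_plus[symmetric] ennreal_less_iff del: ennreal_plus)
  then obtain \<nu> where "\<nu> \<in> H0 p \<Omega> A" "(\<integral>\<^sup>+ z. F (z + \<xi>) \<partial>\<nu>) < ennreal \<epsilon> + Rfun p \<Omega> A F \<xi>"
    unfolding Rfun_def[of p \<Omega> A F \<xi>] by (auto simp: INF_less_iff)
  then show ?thesis unfolding Fset_def by (auto intro: less_imp_le)
qed

lemma Fset_eq_sublevels:
  assumes "lsc F" "ennreal \<epsilon> + Rfun p \<Omega> A F \<xi> = ennreal c" "0 \<le> c"
  shows "Fset p \<Omega> A F \<epsilon> \<xi>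
      = {\<mu> \<in> H0 p \<Omega> A. \<forall>k. (\<integral> z. lipschitz_approx F k (z + \<xi>) \<partial>\<mu>) \<le> c}"
  using assms
  by (auto simp: Fset_def H0_def prob_meas_def prob_space.finite_measure nn_integral_lsc_shift_le_iff)

theorem lemma3p4:
  fixes p \<epsilon> C CM :: real
    and M :: nat
    and \<Omega> :: "(real^'m::finite) set"
    and A :: "'m \<Rightarrow> real^'n::finite \<Rightarrow> real^'d::finite"
    and F :: "real^'n \<Rightarrow> ennreal"
    and \<xi> :: "real^'n"
  assumes p: "1 < p"
    and open_\<Omega>: "open \<Omega>" and bounded_\<Omega>: "bounded \<Omega>"
    and boundary: "emeasure lebesgue (frontier \<Omega>) = 0"
    and lin: "\<forall>i. linear (A i)"
    and const_rank: "\<exists>r. \<forall>w::real^'m. norm w = 1 \<longrightarrow> dim (range (symbol A w)) = r"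
    and F_lsc: "lsc F"
    and C_pos: "C > 0"
    and F_growth: "\<forall>z. ennreal (C * norm z powr p) \<le> F z"
    and eps: "\<epsilon> > 0"
    and CM_pos: "CM > 0"
    and CM_bound: "\<forall>\<mu> \<in> H0 p \<Omega> A. \<forall>\<eta> \<in> Omega_M p \<Omega> A F M.
        (\<integral>\<^sup>+ z. F (z + \<eta>) \<partial>\<mu>) \<le> ennreal \<epsilon> + Rfun p \<Omega> A F \<eta> \<longrightarrow>
        (\<integral>\<^sup>+ z. ennreal (norm z powr p) \<partial>\<mu>) \<le> ennreal CM"
    and xi: "\<xi> \<in> Omega_M p \<Omega> A F M"
  shows "Fset p \<Omega> A F \<epsilon> \<xi> \<noteq> {} \<and> Fset p \<Omega> A F \<epsilon> \<xi> \<subseteq> Y_M p \<Omega> A CM \<and>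
         closedin (subtopology (weakstar p) (Y_M p \<Omega> A CM)) (Fset p \<Omega> A F \<epsilon> \<xi>)"
proof -
  obtain r where r: "Rfun p \<Omega> A F \<xi> = ennreal r" "0 \<le> r"
    using xi by (cases "Rfun p \<Omega> A F \<xi>") (auto simp: Omega_M_def top_unique)
  define c where "c = \<epsilon> + r"
  have c: "ennreal \<epsilon> + Rfun p \<Omega> A F \<xi> = ennreal c" "0 \<le> c"
    using eps r by (simp_all add: c_def ennreal_plus)
  have sub: "Fset p \<Omega> A F \<epsilon> \<xi> \<subseteq> Y_M p \<Omega> A CM"
    using CM_bound xi unfolding Fset_def Y_M_def by blast
  define T where "T k = {\<mu> \<in> topspace (weakstar p). (\<integral> z. lipschitz_approx F k (z + \<xi>) \<partial>\<mu>) \<in> {..c}}"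
    for k
  have "closedin (weakstar p) (T k)" for k
  proof -
    have "continuous_map (weakstar p) euclideanreal (\<lambda>\<mu>. \<integral> z. lipschitz_approx F k (z + \<xi>) \<partial>\<mu>)"
      using p by (intro continuous_map_weakstar_integral lipschitz_approx_shift_in_E_space) simp
    then show ?thesis
      unfolding T_def by (rule closedin_continuous_map_preimage) simp
  qed
  moreover have "Fset p \<Omega> A F \<epsilon> \<xi> = (\<Inter>k. T k) \<inter> Y_M p \<Omega> A CM"
    using sub Y_M_subset_Pmeas_p[of p \<Omega> A CM]
    unfolding Fset_eq_sublevels[OF F_lsc c] T_def topspace_weakstar by (auto simp: Y_M_def)
  ultimately have "closedin (subtopology (weakstar p) (Y_M p \<Omega> A CM)) (Fset p \<Omega> A F \<epsilon> \<xi>)"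
    unfolding closedin_subtopology by blast
  with Fset_nonempty[OF eps r] sub show ?thesis by blast
qed

end
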